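(* Let $X=-x\,f'(y)\frac{\partial}{\partial x}+f(y)\frac{\partial}{\partial y}$ be (the germ at the origin of) a smooth vector field on $\mathbb{R}^2$ with $f$ smooth, and suppose $X(0,0)=0$, i.e. $f(0)=0$. Then the eigenvalues of the linearization $DX(0,0)$ are $-f'(0)$ and $f'(0)$; hence the origin is a hyperbolic singularity of $X$ if and only if $f'(0)\neq 0$. In that case, with $a=f'(0)$, there is a germ at the origin of a smooth diffeomorphism $\psi$ of $(\mathbb{R}^2,0)$ with $\psi^*(x\,dy)=x\,dy$ and $$\psi_*X=-ax\frac{\partial}{\partial x}+ay\frac{\partial}{\partial y}$$ near the origin.
   Context: Coordinates $(x,y)$ on $\mathbb{R}^2$; $x\,dy$ is the Liouville form. The vector fields of this form are exactly the smooth vector fields preserving $x\,dy$. A zero $p$ of a vector field is hyperbolic if $DX(p)$ has no eigenvalue with zero real part. $\psi_*$ denotes pushforward of vector fields and $\psi^*$ pullback of forms. "Smooth" means $C^\infty$. *)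

theory Defs
  imports "HOL-Analysis.Analysis"
begin

text \<open>C^k and C^infinity on a set (intended for open sets), via iterated
  directional (Frechet) derivatives, which must exist and be continuous.\<close>
fun Ck_on :: "nat \<Rightarrow> 'a::real_normed_vector set \<Rightarrow> ('a \<Rightarrow> 'b::real_normed_vector) \<Rightarrow> bool" where
  "Ck_on 0 U g = continuous_on U g"
| "Ck_on (Suc n) U g =
     ((\<forall>x\<in>U. g differentiable (at x)) \<and>
      (\<forall>v. Ck_on n U (\<lambda>x. frechet_derivative g (at x) v)))"

definition smooth_on :: "'a::real_normed_vector set \<Rightarrow> ('a \<Rightarrow> 'b::real_normed_vector) \<Rightarrow> bool" where
  "smooth_on U g \<longleftrightarrow> (\<forall>n. Ck_on n U g)"

text \<open>Complex eigenvalues of a real linear map L of R^2 (given as a function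
  on real*real), i.e. of its matrix with columns L(1,0) and L(0,1).\<close>
definition lin_eigenvalues :: "(real \<times> real \<Rightarrow> real \<times> real) \<Rightarrow> complex set" where
  "lin_eigenvalues L = {\<mu>. \<exists>v1 v2. (v1, v2) \<noteq> (0, 0) \<and>
      complex_of_real (fst (L (1,0))) * v1 + complex_of_real (fst (L (0,1))) * v2 = \<mu> * v1 \<and>
      complex_of_real (snd (L (1,0))) * v1 + complex_of_real (snd (L (0,1))) * v2 = \<mu> * v2}"

definition hyperbolic_zero :: "(real \<times> real \<Rightarrow> real \<times> real) \<Rightarrow> real \<times> real \<Rightarrow> bool" where
  "hyperbolic_zero X p \<longleftrightarrow> X p = (0, 0) \<and> X differentiable (at p) \<and>
     (\<forall>\<mu>\<in>lin_eigenvalues (frechet_derivative X (at p)). Re \<mu> \<noteq> 0)"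

definition liouville_field :: "(real \<Rightarrow> real) \<Rightarrow> real \<times> real \<Rightarrow> real \<times> real" where
  "liouville_field f p = (- fst p * deriv f (snd p), f (snd p))"

end

theory Submission
  imports Defs
begin

text \<open>The field \<open>X\<close> is the cotangent lift of the field \<open>f(y) d/dy\<close> on the line, and its
  linearization at the origin is \<open>diag(-a, a)\<close>. To normalize \<open>X\<close> it therefore suffices to
  linearize \<open>f(y) d/dy\<close>: find a local coordinate \<open>g\<close> with \<open>g(0) = 0\<close>, \<open>g' \<noteq> 0\<close> and
  \<open>g' f = a g\<close>. The cotangent lift \<open>(x, y) \<mapsto> (x / g'(y), g(y))\<close> of \<open>g\<close> preserves \<open>x dy\<close>, its
  inverse is the cotangent lift of \<open>g\<^sup>-\<^sup>1\<close>, and it carries \<open>X\<close> to the cotangent lift of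
  \<open>a y d/dy\<close>, which is \<open>-a x d/dx + a y d/dy\<close>. Such a \<open>g\<close> is \<open>y exp K\<close> with \<open>K\<close> an
  antiderivative of \<open>a/f - 1/y\<close>; this function is smooth at \<open>0\<close> by Hadamard's lemma.\<close>

section \<open>Smoothness\<close>

lemma Ck_on_cong:
  assumes "open U"
  shows "Ck_on n U f \<Longrightarrow> (\<And>x. x \<in> U \<Longrightarrow> f x = g x) \<Longrightarrow> Ck_on n U g"
proof (induction n arbitrary: f g)
  case 0
  then show ?case using continuous_on_cong by force
next
  case (Suc n)
  have dg: "(g has_derivative frechet_derivative f (at x)) (at x)" if "x \<in> U" for x
    using Suc.prems that assms frechet_derivative_works
    by (metis Ck_on.simps(2) has_derivative_transform_within_open)
  then have "frechet_derivative g (at x) = frechet_derivative f (at x)" if "x \<in> U" for x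
    using frechet_derivative_at[OF dg[OF that]] by simp
  then have "Ck_on n U (\<lambda>x. frechet_derivative g (at x) v)" for v
    using Suc.IH[of "\<lambda>x. frechet_derivative f (at x) v"] Suc.prems by auto
  then show ?case
    using dg by (auto simp: differentiable_def)
qed

lemma smooth_on_cong: "open U \<Longrightarrow> smooth_on U f \<Longrightarrow> (\<And>x. x \<in> U \<Longrightarrow> f x = g x) \<Longrightarrow> smooth_on U g"
  unfolding smooth_on_def using Ck_on_cong by blast

lemma Ck_on_Pair:
  assumes "open U"
  shows "Ck_on n U f \<Longrightarrow> Ck_on n U g \<Longrightarrow> Ck_on n U (\<lambda>x. (f x, g x))"
proof (induction n arbitrary: f g)
  case 0
  then show ?case by (auto intro: continuous_on_Pair)
next
  case (Suc n)
  have d: "((\<lambda>x. (f x, g x)) has_derivative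
      (\<lambda>v. (frechet_derivative f (at x) v, frechet_derivative g (at x) v))) (at x)"
    if "x \<in> U" for x
    using Suc.prems that by (auto simp: frechet_derivative_works intro: has_derivative_Pair)
  have "Ck_on n U (\<lambda>x. frechet_derivative (\<lambda>x. (f x, g x)) (at x) v)" for v
  proof (rule Ck_on_cong[OF assms])
    show "Ck_on n U (\<lambda>x. (frechet_derivative f (at x) v, frechet_derivative g (at x) v))"
      using Suc.IH Suc.prems by auto
  qed (simp add: frechet_derivative_at[OF d, symmetric])
  then show ?case using d by (auto simp: differentiable_def)
qed

fun nth_differentiable_on :: "nat \<Rightarrow> real set \<Rightarrow> (real \<Rightarrow> real) \<Rightarrow> bool" where
  "nth_differentiable_on 0 U f = True"
| "nth_differentiable_on (Suc n) U f \<longleftrightarrow>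
     (\<forall>x\<in>U. f differentiable (at x)) \<and> nth_differentiable_on n U (deriv f)"

definition real_smooth_on :: "real set \<Rightarrow> (real \<Rightarrow> real) \<Rightarrow> bool" where
  "real_smooth_on U f \<longleftrightarrow> (\<forall>n. nth_differentiable_on n U f)"

lemma nth_differentiable_on_cong:
  assumes "open U"
  shows "nth_differentiable_on n U f \<Longrightarrow> (\<And>x. x \<in> U \<Longrightarrow> f x = g x) \<Longrightarrow> nth_differentiable_on n U g"
proof (induction n arbitrary: f g)
  case (Suc n)
  have dg: "(g has_real_derivative deriv f x) (at x)" if "x \<in> U" for x
  proof (rule has_field_derivative_transform_within_open[OF _ assms that Suc.prems(2)])
    show "(f has_real_derivative deriv f x) (at x)"
      using Suc.prems(1) that by (simp add: DERIV_deriv_iff_real_differentiable)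
  qed
  have "deriv g x = deriv f x" if "x \<in> U" for x
    using dg[OF that] by (rule DERIV_imp_deriv)
  then have "nth_differentiable_on n U (deriv g)"
    using Suc.IH[of "deriv f" "deriv g"] Suc.prems by simp
  then show ?case
    using dg by (auto simp: real_differentiable_def)
qed simp

lemma nth_differentiable_on_SucI:
  assumes "open U" "\<And>x. x \<in> U \<Longrightarrow> (f has_real_derivative f' x) (at x)" "nth_differentiable_on n U f'"
  shows "nth_differentiable_on (Suc n) U f"
proof -
  have "deriv f x = f' x" if "x \<in> U" for x
    using assms(2)[OF that] by (rule DERIV_imp_deriv)
  then have "nth_differentiable_on n U (deriv f)"
    using nth_differentiable_on_cong[OF assms(1,3), of "deriv f"] by simp
  then show ?thesis using assms(2) by (auto simp: real_differentiable_def)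
qed

lemma nth_differentiable_on_Suc_imp: "nth_differentiable_on (Suc n) U f \<Longrightarrow> nth_differentiable_on n U f"
  by (induction n arbitrary: f) auto

lemma nth_differentiable_on_const: "open U \<Longrightarrow> nth_differentiable_on n U (\<lambda>x. c)"
proof (induction n arbitrary: c)
  case (Suc n)
  then show ?case by (intro nth_differentiable_on_SucI[where f'="\<lambda>x. 0"]) auto
qed simp

lemma nth_differentiable_on_ident: "open U \<Longrightarrow> nth_differentiable_on n U (\<lambda>x. x)"
  by (cases n) (auto intro!: nth_differentiable_on_SucI[where f'="\<lambda>x. 1"] nth_differentiable_on_const)

lemma nth_differentiable_on_add:
  "open U \<Longrightarrow> nth_differentiable_on n U f \<Longrightarrow> nth_differentiable_on n U g
    \<Longrightarrow> nth_differentiable_on n U (\<lambda>x. f x + g x)"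
proof (induction n arbitrary: f g)
  case (Suc n)
  show ?case
  proof (rule nth_differentiable_on_SucI[OF Suc.prems(1)])
    fix x assume "x \<in> U"
    then show "((\<lambda>x. f x + g x) has_real_derivative deriv f x + deriv g x) (at x)"
      using Suc.prems by (auto intro!: DERIV_add simp: DERIV_deriv_iff_real_differentiable)
  qed (use Suc in simp)
qed simp

lemma nth_differentiable_on_mult:
  "open U \<Longrightarrow> nth_differentiable_on n U f \<Longrightarrow> nth_differentiable_on n U g
    \<Longrightarrow> nth_differentiable_on n U (\<lambda>x. f x * g x)"
proof (induction n arbitrary: f g)
  case (Suc n)
  have "nth_differentiable_on n U f" "nth_differentiable_on n U g"
    using Suc.prems(2,3) nth_differentiable_on_Suc_imp by blast+
  then have "nth_differentiable_on n U (\<lambda>x. deriv f x * g x + deriv g x * f x)"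
    using Suc by (auto intro!: nth_differentiable_on_add)
  then show ?case
  proof (rule nth_differentiable_on_SucI[OF Suc.prems(1), rotated])
    fix x assume "x \<in> U"
    then show "((\<lambda>x. f x * g x) has_real_derivative deriv f x * g x + deriv g x * f x) (at x)"
      using Suc.prems by (auto intro!: DERIV_mult simp: DERIV_deriv_iff_real_differentiable)
  qed
qed simp

lemma nth_differentiable_on_compose:
  assumes "open U" "open V" "f ` U \<subseteq> V"
  shows "nth_differentiable_on n V g \<Longrightarrow> nth_differentiable_on n U f
    \<Longrightarrow> nth_differentiable_on n U (\<lambda>x. g (f x))"
proof (induction n arbitrary: g)
  case (Suc n)
  have "nth_differentiable_on n U (\<lambda>x. deriv g (f x) * deriv f x)"
    using Suc nth_differentiable_on_Suc_imp assms(1) by (auto intro!: nth_differentiable_on_mult)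
  then show ?case
  proof (rule nth_differentiable_on_SucI[OF assms(1), rotated])
    fix x assume x: "x \<in> U"
    then have "f x \<in> V" using assms(3) by auto
    then have "(g has_real_derivative deriv g (f x)) (at (f x))"
      using Suc.prems(1) by (simp add: DERIV_deriv_iff_real_differentiable)
    moreover have "(f has_real_derivative deriv f x) (at x)"
      using Suc.prems(2) x by (simp add: DERIV_deriv_iff_real_differentiable)
    ultimately show "((\<lambda>x. g (f x)) has_real_derivative deriv g (f x) * deriv f x) (at x)"
      by (rule DERIV_chain2)
  qed
qed simp

lemma nth_differentiable_on_inverse: "nth_differentiable_on n (- {0}) inverse"
proof (induction n)
  case (Suc n)
  have open_nonzero: "open (- {0 :: real})" by auto
  have "nth_differentiable_on n (- {0}) (\<lambda>x. (- 1) * (inverse x * inverse x))"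
    by (rule nth_differentiable_on_mult[OF open_nonzero nth_differentiable_on_const[OF open_nonzero]
          nth_differentiable_on_mult[OF open_nonzero Suc Suc]])
  moreover have "(inverse has_real_derivative (- 1) * (inverse x * inverse x)) (at x)"
    if "x \<in> - {0}" for x :: real
    using DERIV_inverse[of x] that by (simp add: power2_eq_square)
  ultimately show ?case by (rule nth_differentiable_on_SucI[OF open_nonzero, rotated])
qed simp

lemma nth_differentiable_on_exp: "nth_differentiable_on n UNIV exp"
proof (induction n)
  case (Suc n)
  show ?case by (rule nth_differentiable_on_SucI[OF open_UNIV DERIV_exp Suc])
qed simp

lemma real_smooth_on_has_real_derivative:
  assumes "real_smooth_on U f" "x \<in> U"
  shows "(f has_real_derivative deriv f x) (at x)"
proof -
  have "nth_differentiable_on (Suc 0) U f" using assms(1) by (simp only: real_smooth_on_def)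
  then show ?thesis using assms(2) by (simp add: DERIV_deriv_iff_real_differentiable)
qed

lemma real_smooth_on_deriv: "real_smooth_on U f \<Longrightarrow> real_smooth_on U (deriv f)"
  unfolding real_smooth_on_def using nth_differentiable_on.simps(2) by blast

lemma real_smooth_on_continuous_on: "real_smooth_on U f \<Longrightarrow> continuous_on U f"
  by (meson DERIV_isCont continuous_at_imp_continuous_on real_smooth_on_has_real_derivative)

lemma real_smooth_on_subset: "real_smooth_on U f \<Longrightarrow> V \<subseteq> U \<Longrightarrow> real_smooth_on V f"
proof -
  have "nth_differentiable_on n U f \<Longrightarrow> V \<subseteq> U \<Longrightarrow> nth_differentiable_on n V f" for n
    by (induction n arbitrary: f) auto
  then show "real_smooth_on U f \<Longrightarrow> V \<subseteq> U \<Longrightarrow> real_smooth_on V f"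
    unfolding real_smooth_on_def by blast
qed

lemma real_smooth_on_SucI:
  assumes "open U" "\<And>x. x \<in> U \<Longrightarrow> (f has_real_derivative f' x) (at x)" "real_smooth_on U f'"
  shows "real_smooth_on U f"
  unfolding real_smooth_on_def
proof
  fix n
  have "nth_differentiable_on (Suc n) U f"
    by (rule nth_differentiable_on_SucI[OF assms(1,2)]) (use assms(3) in \<open>auto simp: real_smooth_on_def\<close>)
  then show "nth_differentiable_on n U f" by (rule nth_differentiable_on_Suc_imp)
qed

lemma real_smooth_on_const: "open U \<Longrightarrow> real_smooth_on U (\<lambda>x. c)"
  by (simp add: real_smooth_on_def nth_differentiable_on_const)

lemma real_smooth_on_ident: "open U \<Longrightarrow> real_smooth_on U (\<lambda>x. x)"
  by (simp add: real_smooth_on_def nth_differentiable_on_ident)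

lemma real_smooth_on_add:
  "open U \<Longrightarrow> real_smooth_on U f \<Longrightarrow> real_smooth_on U g \<Longrightarrow> real_smooth_on U (\<lambda>x. f x + g x)"
  by (simp add: real_smooth_on_def nth_differentiable_on_add)

lemma real_smooth_on_mult:
  "open U \<Longrightarrow> real_smooth_on U f \<Longrightarrow> real_smooth_on U g \<Longrightarrow> real_smooth_on U (\<lambda>x. f x * g x)"
  by (simp add: real_smooth_on_def nth_differentiable_on_mult)

lemma real_smooth_on_minus: "open U \<Longrightarrow> real_smooth_on U f \<Longrightarrow> real_smooth_on U (\<lambda>x. - f x)"
  using real_smooth_on_mult[OF _ real_smooth_on_const[of U "- 1"]] by simp

lemma real_smooth_on_compose:
  "open U \<Longrightarrow> open V \<Longrightarrow> f ` U \<subseteq> V \<Longrightarrow> real_smooth_on V g \<Longrightarrow> real_smooth_on U f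
    \<Longrightarrow> real_smooth_on U (\<lambda>x. g (f x))"
  by (simp add: real_smooth_on_def nth_differentiable_on_compose)

lemma real_smooth_on_exp: "open U \<Longrightarrow> real_smooth_on U f \<Longrightarrow> real_smooth_on U (\<lambda>x. exp (f x))"
  using real_smooth_on_compose[of U UNIV f exp] nth_differentiable_on_exp
  by (simp add: real_smooth_on_def)

lemma real_smooth_on_inverse:
  assumes "open U" "real_smooth_on U f" "\<And>x. x \<in> U \<Longrightarrow> f x \<noteq> 0"
  shows "real_smooth_on U (\<lambda>x. inverse (f x))"
proof -
  have "f ` U \<subseteq> - {0}" using assms(3) by auto
  then show ?thesis
    using assms(1,2) real_smooth_on_compose[of U "- {0}" f inverse] nth_differentiable_on_inverse
    by (auto simp: real_smooth_on_def)
qed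

lemma frechet_derivative_real:
  fixes f :: "real \<Rightarrow> real"
  shows "f differentiable (at x) \<Longrightarrow> frechet_derivative f (at x) = (\<lambda>v. deriv f x * v)"
  by (metis DERIV_deriv_iff_real_differentiable frechet_derivative_at has_field_derivative_def
      mult.commute)

lemma real_smooth_on_of_smooth_on:
  fixes f :: "real \<Rightarrow> real"
  assumes "open U" "smooth_on U f"
  shows "real_smooth_on U f"
proof -
  have "Ck_on n U f \<Longrightarrow> nth_differentiable_on n U f" for n
  proof (induction n arbitrary: f)
    case (Suc n)
    then have "Ck_on n U (\<lambda>x. frechet_derivative f (at x) 1)" by simp
    then have "Ck_on n U (deriv f)"
      by (rule Ck_on_cong[OF assms(1)]) (use Suc.prems frechet_derivative_real in auto)
    then show ?case using Suc by auto
  qed simp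
  then show ?thesis using assms(2) by (simp add: smooth_on_def real_smooth_on_def)
qed

section \<open>Cotangent lifts\<close>

lemma fibrewise_affine_has_derivative:
  assumes "(A has_real_derivative A') (at (snd p))" "(B has_real_derivative B') (at (snd p))"
  shows "((\<lambda>q. fst q * A (snd q) + B (snd q)) has_derivative
           (\<lambda>v. fst v * A (snd p) + snd v * (fst p * A' + B'))) (at p)"
proof -
  have snd: "(snd has_derivative snd) (at p)" by (rule has_derivative_snd[OF has_derivative_ident])
  have fst: "(fst has_derivative fst) (at p)" by (rule has_derivative_fst[OF has_derivative_ident])
  have "((\<lambda>q. A (snd q)) has_derivative (\<lambda>v. A' * snd v)) (at p)"
    using has_derivative_compose[OF snd assms(1)[unfolded has_field_derivative_def]] by simp
  moreover have "((\<lambda>q. B (snd q)) has_derivative (\<lambda>v. B' * snd v)) (at p)"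
    using has_derivative_compose[OF snd assms(2)[unfolded has_field_derivative_def]] by simp
  ultimately show ?thesis
    by (rule has_derivative_add[OF has_derivative_mult[OF fst], THEN has_derivative_eq_rhs])
       (auto simp: fun_eq_iff algebra_simps)
qed

lemma Ck_on_fibrewise_affine:
  assumes "open U"
  shows "real_smooth_on U A \<Longrightarrow> real_smooth_on U B
    \<Longrightarrow> Ck_on n (UNIV \<times> U) (\<lambda>p. fst p * A (snd p) + B (snd p))"
proof (induction n arbitrary: A B)
  case 0
  have "isCont (\<lambda>p. fst p * A (snd p) + B (snd p)) p" if "p \<in> UNIV \<times> U" for p
  proof -
    have "snd p \<in> U" using that by auto
    then show ?thesis
      using fibrewise_affine_has_derivative has_derivative_continuous
        real_smooth_on_has_real_derivative[OF "0.prems"(1)] real_smooth_on_has_real_derivative[OF "0.prems"(2)]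
      by blast
  qed
  then show ?case by (simp add: continuous_at_imp_continuous_on)
next
  case (Suc n)
  have d: "((\<lambda>p. fst p * A (snd p) + B (snd p)) has_derivative
      (\<lambda>v. fst v * A (snd p) + snd v * (fst p * deriv A (snd p) + deriv B (snd p)))) (at p)"
    if "p \<in> UNIV \<times> U" for p
    using that Suc.prems
    by (intro fibrewise_affine_has_derivative) (auto intro: real_smooth_on_has_real_derivative)
  have "Ck_on n (UNIV \<times> U) (\<lambda>p. frechet_derivative (\<lambda>p. fst p * A (snd p) + B (snd p)) (at p) v)"
    for v
  proof (rule Ck_on_cong)
    have "real_smooth_on U (\<lambda>y. snd v * deriv A y)"
      "real_smooth_on U (\<lambda>y. fst v * A y + snd v * deriv B y)"
      using Suc.prems assms
      by (auto intro!: real_smooth_on_add real_smooth_on_mult real_smooth_on_const real_smooth_on_deriv)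
    then show "Ck_on n (UNIV \<times> U)
        (\<lambda>p. fst p * (snd v * deriv A (snd p)) + (fst v * A (snd p) + snd v * deriv B (snd p)))"
      by (rule Suc.IH)
    show "fst p * (snd v * deriv A (snd p)) + (fst v * A (snd p) + snd v * deriv B (snd p))
        = frechet_derivative (\<lambda>p. fst p * A (snd p) + B (snd p)) (at p) v"
      if "p \<in> UNIV \<times> U" for p
      unfolding frechet_derivative_at[OF d[OF that], symmetric] by (simp add: algebra_simps)
  qed (use assms in \<open>simp add: open_Times\<close>)
  moreover have "(\<lambda>p. fst p * A (snd p) + B (snd p)) differentiable (at p)" if "p \<in> UNIV \<times> U" for p
    using d[OF that] unfolding differentiable_def by blast
  ultimately show ?case by simp
qed

lemma smooth_on_fibrewise_affine_pair:
  assumes "open U" "real_smooth_on U A" "real_smooth_on U B" "real_smooth_on U C" "real_smooth_on U D"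
  shows "smooth_on (UNIV \<times> U)
    (\<lambda>p. (fst p * A (snd p) + B (snd p), fst p * C (snd p) + D (snd p)))"
  unfolding smooth_on_def
  using Ck_on_Pair[OF open_Times[OF open_UNIV assms(1)]] Ck_on_fibrewise_affine[OF assms(1)] assms(2-5)
  by blast

text \<open>With \<open>x\<close> read as the fibre coordinate over the base coordinate \<open>y\<close>, this is the
  cotangent lift of \<open>g\<close>; it therefore preserves the Liouville form \<open>x dy\<close>.\<close>

definition cotangent_lift :: "(real \<Rightarrow> real) \<Rightarrow> real \<times> real \<Rightarrow> real \<times> real" where
  "cotangent_lift g p = (fst p / deriv g (snd p), g (snd p))"

lemma smooth_on_cotangent_lift:
  assumes "open I" "real_smooth_on I g" "\<And>y. y \<in> I \<Longrightarrow> deriv g y \<noteq> 0"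
  shows "smooth_on (UNIV \<times> I) (cotangent_lift g)"
proof (rule smooth_on_cong)
  show "smooth_on (UNIV \<times> I)
      (\<lambda>p. (fst p * inverse (deriv g (snd p)) + 0, fst p * 0 + g (snd p)))"
    using smooth_on_fibrewise_affine_pair[where A="\<lambda>y. inverse (deriv g y)" and B="\<lambda>y. 0"
        and C="\<lambda>y. 0" and D=g] assms
    by (simp add: real_smooth_on_inverse real_smooth_on_deriv real_smooth_on_const)
qed (use assms(1) in \<open>auto simp: cotangent_lift_def open_Times field_simps\<close>)

lemma cotangent_lift_has_derivative:
  assumes "(g has_real_derivative deriv g (snd p)) (at (snd p))"
    and "(deriv g has_real_derivative g'') (at (snd p))" and nz: "deriv g (snd p) \<noteq> 0"
  shows "(cotangent_lift g has_derivative
      (\<lambda>v. (fst v / deriv g (snd p) - fst p * g'' * snd v / (deriv g (snd p))\<^sup>2,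
            deriv g (snd p) * snd v))) (at p)"
proof -
  have snd: "(snd has_derivative snd) (at p)" by (rule has_derivative_snd[OF has_derivative_ident])
  have dg: "((\<lambda>q. g (snd q)) has_derivative (\<lambda>v. deriv g (snd p) * snd v)) (at p)"
    using has_derivative_compose[OF snd assms(1)[unfolded has_field_derivative_def]] .
  have dg': "((\<lambda>q. deriv g (snd q)) has_derivative (\<lambda>v. g'' * snd v)) (at p)"
    using has_derivative_compose[OF snd assms(2)[unfolded has_field_derivative_def]] .
  show ?thesis
    unfolding cotangent_lift_def
    by (rule has_derivative_eq_rhs[OF has_derivative_Pair[OF
          has_derivative_divide[OF has_derivative_fst[OF has_derivative_ident] dg' nz] dg]])
       (use nz in \<open>auto simp: fun_eq_iff field_simps power2_eq_square\<close>)
qed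

lemma frechet_derivative_cotangent_lift:
  assumes "real_smooth_on I g" "snd p \<in> I" "deriv g (snd p) \<noteq> 0"
  shows "frechet_derivative (cotangent_lift g) (at p) =
      (\<lambda>v. (fst v / deriv g (snd p) - fst p * deriv (deriv g) (snd p) * snd v / (deriv g (snd p))\<^sup>2,
            deriv g (snd p) * snd v))"
  using assms
  by (intro frechet_derivative_at[symmetric] cotangent_lift_has_derivative)
     (auto intro: real_smooth_on_has_real_derivative real_smooth_on_deriv)

lemma cotangent_lift_preserves_liouville_form:
  assumes "real_smooth_on I g" "snd p \<in> I" "deriv g (snd p) \<noteq> 0"
  shows "fst (cotangent_lift g p) * snd (frechet_derivative (cotangent_lift g) (at p) v) = fst p * snd v"
  using assms by (simp add: frechet_derivative_cotangent_lift cotangent_lift_def)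

lemma cotangent_lift_pushforward_liouville_field:
  assumes "open I" "snd p \<in> I" "real_smooth_on I f" "real_smooth_on I g" "deriv g (snd p) \<noteq> 0"
    and ode: "\<And>y. y \<in> I \<Longrightarrow> deriv g y * f y = a * g y"
  shows "frechet_derivative (cotangent_lift g) (at p) (liouville_field f p)
    = (- a * fst (cotangent_lift g p), a * snd (cotangent_lift g p))"
proof -
  obtain x y where p: "p = (x, y)" by fastforce
  have y: "y \<in> I" using assms(2) p by simp
  have "((\<lambda>y. deriv g y * f y) has_real_derivative
      deriv (deriv g) y * f y + deriv f y * deriv g y) (at y)"
    using assms(3,4) y
    by (auto intro!: DERIV_mult real_smooth_on_has_real_derivative real_smooth_on_deriv)
  then have "((\<lambda>y. a * g y) has_real_derivative
      deriv (deriv g) y * f y + deriv f y * deriv g y) (at y)"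
    by (rule has_field_derivative_transform_within_open[OF _ assms(1) y]) (use ode in simp)
  then have ode': "deriv (deriv g) y * f y + deriv f y * deriv g y = a * deriv g y"
    using DERIV_unique DERIV_cmult[OF real_smooth_on_has_real_derivative[OF assms(4) y]] by blast
  have "- x * deriv f y / deriv g y - x * deriv (deriv g) y * f y / (deriv g y)\<^sup>2
      = - x * (deriv (deriv g) y * f y + deriv f y * deriv g y) / (deriv g y)\<^sup>2"
    using assms(5) p by (simp add: field_simps power2_eq_square)
  also have "\<dots> = - x * (a * deriv g y) / (deriv g y)\<^sup>2"
    by (simp only: ode')
  also have "\<dots> = - a * (x / deriv g y)"
    using assms(5) by (simp add: field_simps power2_eq_square)
  finally have "- x * deriv f y / deriv g y - x * deriv (deriv g) y * f y / (deriv g y)\<^sup>2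
      = - a * (x / deriv g y)" .
  then show ?thesis
    using assms p ode[OF y]
    by (simp add: frechet_derivative_cotangent_lift liouville_field_def cotangent_lift_def)
qed

lemma cotangent_lift_inverse:
  assumes "G (g (snd p)) = snd p" "deriv G (g (snd p)) = inverse (deriv g (snd p))"
    "deriv g (snd p) \<noteq> 0"
  shows "cotangent_lift G (cotangent_lift g p) = p"
  using assms by (simp add: cotangent_lift_def prod_eq_iff)

lemma inv_into_has_real_derivative:
  assumes "open I" "real_smooth_on I g" "\<And>y. y \<in> I \<Longrightarrow> deriv g y \<noteq> 0" "inj_on g I" "w \<in> g ` I"
  shows "(inv_into I g has_real_derivative inverse (deriv g (inv_into I g w))) (at w)"
proof -
  let ?G = "inv_into I g"
  have x: "?G w \<in> I" using assms(5) by (auto simp: inv_into_into)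
  have "(?G has_derivative (*) (inverse (deriv g (?G w)))) (at (g (?G w)))"
  proof (rule has_derivative_inverse_strong[OF assms(1) x])
    show "continuous_on I g" using real_smooth_on_continuous_on[OF assms(2)] .
    show "\<And>x. x \<in> I \<Longrightarrow> ?G (g x) = x" using assms(4) by (simp add: inv_into_f_f)
    show "(g has_derivative (*) (deriv g (?G w))) (at (?G w))"
      using real_smooth_on_has_real_derivative[OF assms(2) x] by (simp add: has_field_derivative_def)
    show "(*) (deriv g (?G w)) \<circ> (*) (inverse (deriv g (?G w))) = id"
      using assms(3)[OF x] by (auto simp: fun_eq_iff)
  qed
  then show ?thesis
    using assms(5) by (simp add: has_field_derivative_def mult.commute f_inv_into_f)
qed

lemma real_smooth_on_inv_into:
  assumes "open I" "real_smooth_on I g" "\<And>y. y \<in> I \<Longrightarrow> deriv g y \<noteq> 0" "inj_on g I"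
    and "open (g ` I)"
  shows "real_smooth_on (g ` I) (inv_into I g)"
proof -
  let ?G = "inv_into I g"
  have GI: "?G ` g ` I \<subseteq> I" by (auto simp: inv_into_into)
  have "nth_differentiable_on n (g ` I) ?G" for n
  proof (induction n)
    case (Suc n)
    have "nth_differentiable_on n I (deriv g)"
      using real_smooth_on_deriv[OF assms(2)] by (simp add: real_smooth_on_def)
    then have "nth_differentiable_on n (g ` I) (\<lambda>w. deriv g (?G w))"
      by (rule nth_differentiable_on_compose[OF assms(5,1) GI _ Suc])
    moreover have "(\<lambda>w. deriv g (?G w)) ` g ` I \<subseteq> - {0}"
      using assms(3,4) by (auto simp: inv_into_f_f)
    ultimately have "nth_differentiable_on n (g ` I) (\<lambda>w. inverse (deriv g (?G w)))"
      using nth_differentiable_on_compose[OF assms(5) open_Compl[OF closed_singleton] _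
          nth_differentiable_on_inverse] by blast
    then show ?case
      using inv_into_has_real_derivative[OF assms(1-4)]
      by (intro nth_differentiable_on_SucI[OF assms(5)])
  qed simp
  then show ?thesis unfolding real_smooth_on_def by blast
qed

lemma cotangent_lift_diffeomorphism:
  fixes g :: "real \<Rightarrow> real"
  assumes I: "open I" and g: "real_smooth_on I g" and nz: "\<And>y. y \<in> I \<Longrightarrow> deriv g y \<noteq> 0"
    and inj: "inj_on g I"
  defines "G \<equiv> inv_into I g"
  shows "open (g ` I)" "smooth_on (UNIV \<times> I) (cotangent_lift g)"
    "smooth_on (UNIV \<times> g ` I) (cotangent_lift G)"
    "cotangent_lift g ` (UNIV \<times> I) = UNIV \<times> g ` I"
    "\<And>p. p \<in> UNIV \<times> I \<Longrightarrow> cotangent_lift G (cotangent_lift g p) = p"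
    "\<And>q. q \<in> UNIV \<times> g ` I \<Longrightarrow> cotangent_lift g (cotangent_lift G q) = q"
proof -
  show W: "open (g ` I)"
    by (rule invariance_of_domain[OF real_smooth_on_continuous_on[OF g] I inj])
  have GI: "G w \<in> I" if "w \<in> g ` I" for w
    using that by (simp add: G_def inv_into_into)
  have G': "deriv G w = inverse (deriv g (G w))" if "w \<in> g ` I" for w
    using DERIV_imp_deriv[OF inv_into_has_real_derivative[OF I g nz inj that]] by (simp add: G_def)
  have G: "real_smooth_on (g ` I) G"
    unfolding G_def by (rule real_smooth_on_inv_into[OF I g nz inj W])
  show "smooth_on (UNIV \<times> I) (cotangent_lift g)"
    by (rule smooth_on_cotangent_lift[OF I g nz])
  show "smooth_on (UNIV \<times> g ` I) (cotangent_lift G)"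
    using nz GI G' by (intro smooth_on_cotangent_lift[OF W G]) simp
  show left: "cotangent_lift G (cotangent_lift g p) = p" if "p \<in> UNIV \<times> I" for p
  proof (rule cotangent_lift_inverse)
    have y: "snd p \<in> I" using that by auto
    then show Ggy: "G (g (snd p)) = snd p" using inj by (simp add: G_def inv_into_f_f)
    show "deriv G (g (snd p)) = inverse (deriv g (snd p))" using G' y Ggy by force
    show "deriv g (snd p) \<noteq> 0" using nz y by blast
  qed
  show right: "cotangent_lift g (cotangent_lift G q) = q" if "q \<in> UNIV \<times> g ` I" for q
  proof (rule cotangent_lift_inverse)
    have w: "snd q \<in> g ` I" using that by auto
    then show "g (G (snd q)) = snd q" by (simp add: G_def f_inv_into_f)
    show "deriv g (G (snd q)) = inverse (deriv G (snd q))" using G'[OF w] by simp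
    show "deriv G (snd q) \<noteq> 0" using G'[OF w] nz[OF GI[OF w]] by simp
  qed
  show "cotangent_lift g ` (UNIV \<times> I) = UNIV \<times> g ` I"
  proof
    show "cotangent_lift g ` (UNIV \<times> I) \<subseteq> UNIV \<times> g ` I"
      by (auto simp: cotangent_lift_def)
    show "UNIV \<times> g ` I \<subseteq> cotangent_lift g ` (UNIV \<times> I)"
    proof
      fix q :: "real \<times> real" assume q: "q \<in> UNIV \<times> g ` I"
      then have "cotangent_lift G q \<in> UNIV \<times> I"
        using GI by (auto simp: cotangent_lift_def mem_Times_iff)
      then show "q \<in> cotangent_lift g ` (UNIV \<times> I)"
        using right[OF q] by (metis image_eqI)
    qed
  qed
qed

section \<open>Linearizing a vector field on the line\<close>

definition radial_moment :: "nat \<Rightarrow> (real \<Rightarrow> real) \<Rightarrow> real \<Rightarrow> real" where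
  "radial_moment m \<phi> y = integral {0..1} (\<lambda>t. t ^ m * \<phi> (t * y))"

lemma mult_mem_symmetric_interval:
  fixes R y t :: real
  assumes "y \<in> {-R<..<R}" "t \<in> {0..1}"
  shows "t * y \<in> {-R<..<R}"
proof -
  have "\<bar>t * y\<bar> \<le> \<bar>y\<bar>" using assms(2) by (auto simp: abs_mult intro: mult_left_le_one_le)
  then show ?thesis using assms(1) by auto
qed

lemma continuous_on_scaled:
  fixes R y :: real
  assumes "continuous_on {-R<..<R} \<phi>" "y \<in> {-R<..<R}"
  shows "continuous_on {0..1} (\<lambda>t. \<phi> (t * y))"
  by (rule continuous_on_compose2[OF assms(1)])
     (use mult_mem_symmetric_interval[OF assms(2)] in \<open>auto intro!: continuous_intros\<close>)

lemma radial_moment_has_real_derivative: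
  fixes R y :: real
  assumes "real_smooth_on {-R<..<R} \<phi>" "y \<in> {-R<..<R}"
  shows "(radial_moment m \<phi> has_real_derivative radial_moment (Suc m) (deriv \<phi>) y) (at y)"
proof -
  let ?I = "{-R<..<R}"
  have "((\<lambda>y. integral (cbox 0 1) (\<lambda>t. t ^ m * \<phi> (t * y))) has_field_derivative
          integral (cbox 0 1) (\<lambda>t. t ^ Suc m * deriv \<phi> (t * y))) (at y within ?I)"
  proof (rule leibniz_rule_field_derivative)
    fix x t assume "x \<in> ?I" "t \<in> cbox (0::real) 1"
    then have tx: "t * x \<in> ?I" using mult_mem_symmetric_interval by auto
    have "((\<lambda>x. t ^ m * \<phi> (t * x)) has_field_derivative t ^ m * (deriv \<phi> (t * x) * t)) (at x)"
      by (intro DERIV_cmult DERIV_chain2[of \<phi>] real_smooth_on_has_real_derivative[OF assms(1) tx])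
         (auto intro!: derivative_eq_intros)
    then show "((\<lambda>x. t ^ m * \<phi> (t * x)) has_field_derivative t ^ Suc m * deriv \<phi> (t * x))
        (at x within ?I)"
      by (auto intro: has_field_derivative_at_within simp: algebra_simps)
  next
    fix x assume "x \<in> ?I"
    then show "(\<lambda>t. t ^ m * \<phi> (t * x)) integrable_on cbox 0 1"
      using continuous_on_scaled[OF real_smooth_on_continuous_on[OF assms(1)]]
      by (auto intro!: integrable_continuous_real continuous_intros)
  next
    have "continuous_on (?I \<times> cbox 0 1) (\<lambda>p. deriv \<phi> (snd p * fst p))"
      by (rule continuous_on_compose2[OF real_smooth_on_continuous_on[OF real_smooth_on_deriv[OF assms(1)]]])
         (auto intro!: continuous_intros mult_mem_symmetric_interval)
    then show "continuous_on (?I \<times> cbox 0 1) (\<lambda>(x, t). t ^ Suc m * deriv \<phi> (t * x))"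
      by (auto simp: case_prod_beta intro!: continuous_intros)
  qed (use assms(2) in auto)
  then have "(radial_moment m \<phi> has_real_derivative radial_moment (Suc m) (deriv \<phi>) y) (at y within ?I)"
    unfolding radial_moment_def cbox_interval .
  then show ?thesis
    using at_within_open[OF assms(2) open_greaterThanLessThan] by simp
qed

lemma real_smooth_on_radial_moment:
  "real_smooth_on {-R<..<R} \<phi> \<Longrightarrow> real_smooth_on {-R<..<R} (radial_moment m \<phi>)"
proof -
  have "real_smooth_on {-R<..<R} \<phi> \<Longrightarrow> nth_differentiable_on n {-R<..<R} (radial_moment m \<phi>)" for n
  proof (induction n arbitrary: m \<phi>)
    case (Suc n)
    show ?case
      by (rule nth_differentiable_on_SucI[where f'="radial_moment (Suc m) (deriv \<phi>)"])
         (use Suc real_smooth_on_deriv radial_moment_has_real_derivative in auto)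
  qed simp
  then show "real_smooth_on {-R<..<R} \<phi> \<Longrightarrow> real_smooth_on {-R<..<R} (radial_moment m \<phi>)"
    unfolding real_smooth_on_def by blast
qed

lemma hadamard_identity:
  fixes R y :: real
  assumes "real_smooth_on {-R<..<R} \<phi>" "y \<in> {-R<..<R}"
  shows "\<phi> y = \<phi> 0 + y * radial_moment 0 (deriv \<phi>) y"
proof -
  have "((\<lambda>t. deriv \<phi> (t * y) * y) has_integral \<phi> (1 * y) - \<phi> (0 * y)) {0..1}"
  proof (rule fundamental_theorem_of_calculus)
    fix t :: real assume "t \<in> {0..1}"
    then have "t * y \<in> {-R<..<R}" using mult_mem_symmetric_interval[OF assms(2)] by auto
    then have "((\<lambda>t. \<phi> (t * y)) has_real_derivative deriv \<phi> (t * y) * y) (at t)"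
      by (intro DERIV_chain2[of \<phi>] real_smooth_on_has_real_derivative[OF assms(1)])
         (auto intro!: derivative_eq_intros)
    then show "((\<lambda>t. \<phi> (t * y)) has_vector_derivative deriv \<phi> (t * y) * y) (at t within {0..1})"
      by (auto simp: has_real_derivative_iff_has_vector_derivative intro: has_vector_derivative_at_within)
  qed simp
  moreover have "(\<lambda>t. deriv \<phi> (t * y)) integrable_on {0..1}"
    using continuous_on_scaled[OF real_smooth_on_continuous_on[OF real_smooth_on_deriv[OF assms(1)]] assms(2)]
    by (auto intro!: integrable_continuous_real)
  then have "((\<lambda>t. deriv \<phi> (t * y)) has_integral radial_moment 0 (deriv \<phi>) y) {0..1}"
    by (simp add: radial_moment_def integrable_integral)
  then have "((\<lambda>t. deriv \<phi> (t * y) * y) has_integral radial_moment 0 (deriv \<phi>) y * y) {0..1}"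
    by (rule has_integral_mult_left)
  ultimately have "\<phi> (1 * y) - \<phi> (0 * y) = radial_moment 0 (deriv \<phi>) y * y"
    by (rule has_integral_unique)
  then have "\<phi> y - \<phi> 0 = y * radial_moment 0 (deriv \<phi>) y"
    by (simp add: mult.commute)
  then show ?thesis by linarith
qed

lemma hadamard_factorization:
  assumes "real_smooth_on {-R<..<R} \<phi>"
  obtains h where "real_smooth_on {-R<..<R} h" "h 0 = deriv \<phi> 0"
    "\<And>y. y \<in> {-R<..<R} \<Longrightarrow> \<phi> y = \<phi> 0 + y * h y"
proof
  show "real_smooth_on {-R<..<R} (radial_moment 0 (deriv \<phi>))"
    by (rule real_smooth_on_radial_moment[OF real_smooth_on_deriv[OF assms]])
  show "radial_moment 0 (deriv \<phi>) 0 = deriv \<phi> 0"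
    by (simp add: radial_moment_def)
qed (rule hadamard_identity[OF assms])

lemma real_smooth_on_integral_lower_endpoint:
  assumes "real_smooth_on {-s<..<s} k" "0 < r" "r < s"
  shows "real_smooth_on {-r<..<r} (\<lambda>y. integral {-r..y} k)"
    "\<And>y. y \<in> {-r<..<r} \<Longrightarrow> ((\<lambda>y. integral {-r..y} k) has_real_derivative k y) (at y)"
proof -
  have sub: "{-r..r} \<subseteq> {-s<..<s}" using assms(2,3) by auto
  have c: "continuous_on {-r..r} k"
    by (rule continuous_on_subset[OF real_smooth_on_continuous_on[OF assms(1)] sub])
  show d: "((\<lambda>y. integral {-r..y} k) has_real_derivative k y) (at y)" if "y \<in> {-r<..<r}" for y
  proof -
    have "((\<lambda>y. integral {-r..y} k) has_real_derivative k y) (at y within {-r..r})"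
      using that by (intro integral_has_real_derivative[OF c]) auto
    moreover have "at y within {-r..r} = at y"
      using that by (intro at_within_interior) auto
    ultimately show ?thesis by simp
  qed
  have "real_smooth_on {-r<..<r} k"
    by (rule real_smooth_on_subset[OF assms(1)]) (use sub in auto)
  then show "real_smooth_on {-r<..<r} (\<lambda>y. integral {-r..y} k)"
    by (rule real_smooth_on_SucI[OF open_greaterThanLessThan d, rotated])
qed

lemma inj_on_deriv_nonzero:
  fixes g :: "real \<Rightarrow> real"
  assumes d: "\<And>x. x \<in> {c<..<e} \<Longrightarrow> (g has_real_derivative g' x) (at x)"
    and nz: "\<And>x. x \<in> {c<..<e} \<Longrightarrow> g' x \<noteq> 0"
  shows "inj_on g {c<..<e}"
proof -
  have False if xy: "x < y" "x \<in> {c<..<e}" "y \<in> {c<..<e}" "g x = g y" for x y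
  proof -
    have sub: "{x..y} \<subseteq> {c<..<e}" using xy by auto
    have "continuous_on {x..y} g"
      using sub d by (meson DERIV_isCont continuous_at_imp_continuous_on subsetD)
    moreover have "g differentiable (at z)" if "x < z" "z < y" for z
      using that sub d real_differentiable_def by (meson atLeastAtMost_iff less_imp_le subsetD)
    ultimately obtain z where z: "x < z" "z < y" "(g has_real_derivative 0) (at z)"
      using Rolle[OF xy(1) xy(4)] by blast
    then have "z \<in> {x..y}" by auto
    then have "z \<in> {c<..<e}" using sub by blast
    then show False using DERIV_unique[OF d z(3)] nz by metis
  qed
  then show ?thesis unfolding inj_on_def by (metis linorder_neqE_linordered_idom)
qed

text \<open>With \<open>f = y h\<close> and \<open>h = a + y q\<close>, the equation \<open>g'/g = a/f\<close> for
  \<open>g = y exp K\<close> reads \<open>K' = a/f - 1/y = - q/h\<close>, which is smooth across \<open>y = 0\<close>.\<close>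

lemma linearizing_coordinate:
  fixes f :: "real \<Rightarrow> real"
  assumes "0 < R" and f: "real_smooth_on {-R<..<R} f" and "f 0 = 0" and a: "deriv f 0 \<noteq> 0"
  obtains r g where "0 < r" "r < R" "real_smooth_on {-r<..<r} g" "g 0 = 0"
    "\<And>y. y \<in> {-r<..<r} \<Longrightarrow> deriv g y \<noteq> 0"
    "\<And>y. y \<in> {-r<..<r} \<Longrightarrow> deriv g y * f y = deriv f 0 * g y"
proof -
  define a where "a = deriv f 0"
  obtain h where h: "real_smooth_on {-R<..<R} h" "h 0 = a" "\<And>y. y \<in> {-R<..<R} \<Longrightarrow> f y = y * h y"
    using hadamard_factorization[OF f] \<open>f 0 = 0\<close> unfolding a_def by auto
  obtain q where q: "real_smooth_on {-R<..<R} q" "\<And>y. y \<in> {-R<..<R} \<Longrightarrow> h y = a + y * q y"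
    using hadamard_factorization[OF h(1)] h(2) by metis
  have "0 \<in> {-R<..<R}" using \<open>0 < R\<close> by simp
  then have "isCont h 0"
    by (rule DERIV_isCont[OF real_smooth_on_has_real_derivative[OF h(1)]])
  then obtain s0 where "s0 > 0" and s0: "\<And>y. dist 0 y < s0 \<Longrightarrow> h y \<noteq> 0"
    using continuous_at_avoid[of 0 h 0] h(2) a a_def by auto
  define s where "s = min s0 R"
  define r where "r = s / 2"
  have "0 < r" "r < s" "s \<le> R" using \<open>s0 > 0\<close> \<open>0 < R\<close> by (auto simp: r_def s_def)
  have sR: "{-s<..<s} \<subseteq> {-R<..<R}" using \<open>s \<le> R\<close> by auto
  have hnz: "h y \<noteq> 0" if "y \<in> {-s<..<s}" for y
    using that s0 by (auto simp: s_def dist_real_def)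
  define k where "k y = - q y / h y" for y
  have "real_smooth_on {-s<..<s} q" "real_smooth_on {-s<..<s} h"
    using real_smooth_on_subset[OF q(1) sR] real_smooth_on_subset[OF h(1) sR] .
  then have "real_smooth_on {-s<..<s} k"
    unfolding k_def divide_inverse
    by (intro real_smooth_on_minus real_smooth_on_mult real_smooth_on_inverse hnz) auto
  note K = real_smooth_on_integral_lower_endpoint[OF this \<open>0 < r\<close> \<open>r < s\<close>]
  define E where "E y = exp (integral {-r..y} k)" for y
  define g where "g y = y * E y" for y
  have g': "(g has_real_derivative E y * (1 + y * k y)) (at y)" if "y \<in> {-r<..<r}" for y
    using K(2)[OF that] unfolding g_def E_def
    by (auto intro!: derivative_eq_intros simp: algebra_simps)
  have key: "(1 + y * k y) * h y = a" if "y \<in> {-r<..<r}" for y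
  proof -
    have y: "y \<in> {-s<..<s}" using that \<open>r < s\<close> by auto
    then have "(1 + y * k y) * h y = h y - y * q y"
      using hnz by (simp add: k_def field_simps)
    also have "\<dots> = a" using q(2) y sR by auto
    finally show ?thesis .
  qed
  show ?thesis
  proof
    show "0 < r" "r < R" using \<open>0 < r\<close> \<open>r < s\<close> \<open>s \<le> R\<close> by auto
    show "real_smooth_on {-r<..<r} g"
      unfolding g_def E_def using K(1)
      by (auto intro!: real_smooth_on_mult real_smooth_on_ident real_smooth_on_exp)
    show "g 0 = 0" by (simp add: g_def)
    show "deriv g y \<noteq> 0" if "y \<in> {-r<..<r}" for y
      using DERIV_imp_deriv[OF g'[OF that]] key[OF that] a by (auto simp: E_def a_def)
    show "deriv g y * f y = deriv f 0 * g y" if "y \<in> {-r<..<r}" for y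
    proof -
      have "y \<in> {-s<..<s}" using that \<open>r < s\<close> by auto
      then have "f y = y * h y" using h(3) sR by blast
      then have "deriv g y * f y = y * E y * ((1 + y * k y) * h y)"
        by (simp add: DERIV_imp_deriv[OF g'[OF that]])
      also have "\<dots> = deriv f 0 * g y" by (simp add: key[OF that] g_def a_def)
      finally show ?thesis .
    qed
  qed
qed

section \<open>The Liouville field\<close>

lemma lin_eigenvalues_diagonal:
  "lin_eigenvalues (\<lambda>v. (b * fst v, c * snd v)) = {complex_of_real b, complex_of_real c}"
proof
  show "lin_eigenvalues (\<lambda>v. (b * fst v, c * snd v)) \<subseteq> {complex_of_real b, complex_of_real c}"
  proof
    fix \<mu> assume "\<mu> \<in> lin_eigenvalues (\<lambda>v. (b * fst v, c * snd v))"
    then obtain v1 v2 where v: "(v1, v2) \<noteq> (0, 0)" "complex_of_real b * v1 = \<mu> * v1"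
      "complex_of_real c * v2 = \<mu> * v2"
      by (auto simp: lin_eigenvalues_def)
    show "\<mu> \<in> {complex_of_real b, complex_of_real c}"
    proof (cases "v1 = 0")
      case True
      then have "v2 \<noteq> 0" using v(1) by simp
      then show ?thesis using v(3) by simp
    next
      case False
      then show ?thesis using v(2) by simp
    qed
  qed
  have "complex_of_real b \<in> lin_eigenvalues (\<lambda>v. (b * fst v, c * snd v))"
    unfolding lin_eigenvalues_def by (rule CollectI, rule exI[of _ 1], rule exI[of _ 0]) simp
  moreover have "complex_of_real c \<in> lin_eigenvalues (\<lambda>v. (b * fst v, c * snd v))"
    unfolding lin_eigenvalues_def by (rule CollectI, rule exI[of _ 0], rule exI[of _ 1]) simp
  ultimately show "{complex_of_real b, complex_of_real c} \<subseteq> lin_eigenvalues (\<lambda>v. (b * fst v, c * snd v))"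
    by simp
qed

lemma liouville_field_has_derivative:
  assumes "(f has_real_derivative deriv f (snd p)) (at (snd p))"
    "(deriv f has_real_derivative f'') (at (snd p))"
  shows "(liouville_field f has_derivative
      (\<lambda>v. (- fst v * deriv f (snd p) - fst p * f'' * snd v, deriv f (snd p) * snd v))) (at p)"
proof -
  have snd: "(snd has_derivative snd) (at p)" by (rule has_derivative_snd[OF has_derivative_ident])
  have "((\<lambda>q. - fst q * deriv f (snd q)) has_derivative
      (\<lambda>v. - fst p * (f'' * snd v) + - fst v * deriv f (snd p))) (at p)"
    by (rule has_derivative_mult[OF has_derivative_minus[OF has_derivative_fst[OF has_derivative_ident]]
          has_derivative_compose[OF snd assms(2)[unfolded has_field_derivative_def]]])
  moreover have "((\<lambda>q. f (snd q)) has_derivative (\<lambda>v. deriv f (snd p) * snd v)) (at p)"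
    using has_derivative_compose[OF snd assms(1)[unfolded has_field_derivative_def]] .
  ultimately show ?thesis
    unfolding liouville_field_def
    by (rule has_derivative_Pair[THEN has_derivative_eq_rhs]) (auto simp: fun_eq_iff algebra_simps)
qed

lemma frechet_derivative_liouville_field:
  assumes "real_smooth_on U f" "snd p \<in> U"
  shows "liouville_field f differentiable (at p)"
    "frechet_derivative (liouville_field f) (at p) = (\<lambda>v.
      (- fst v * deriv f (snd p) - fst p * deriv (deriv f) (snd p) * snd v, deriv f (snd p) * snd v))"
proof -
  have "(liouville_field f has_derivative (\<lambda>v.
      (- fst v * deriv f (snd p) - fst p * deriv (deriv f) (snd p) * snd v, deriv f (snd p) * snd v))) (at p)"
    using assms
    by (intro liouville_field_has_derivative real_smooth_on_has_real_derivative real_smooth_on_deriv)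
  then show "liouville_field f differentiable (at p)"
    "frechet_derivative (liouville_field f) (at p) = (\<lambda>v.
      (- fst v * deriv f (snd p) - fst p * deriv (deriv f) (snd p) * snd v, deriv f (snd p) * snd v))"
    by (auto simp: frechet_derivative_at[symmetric] differentiable_def)
qed

lemma liouville_field_normal_form:
  fixes f :: "real \<Rightarrow> real"
  assumes "open U" "0 \<in> U" "real_smooth_on U f" "f 0 = 0" "deriv f 0 \<noteq> 0"
  shows "\<exists>V W (\<psi> :: real \<times> real \<Rightarrow> real \<times> real) \<phi>.
            open V \<and> open W \<and> (0, 0) \<in> V \<and> V \<subseteq> {p. snd p \<in> U} \<and>
            \<psi> (0, 0) = (0, 0) \<and> \<psi> ` V = W \<and>
            smooth_on V \<psi> \<and> smooth_on W \<phi> \<and>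
            (\<forall>p\<in>V. \<phi> (\<psi> p) = p) \<and> (\<forall>q\<in>W. \<psi> (\<phi> q) = q) \<and>
            (\<forall>p\<in>V. \<forall>v. fst (\<psi> p) * snd (frechet_derivative \<psi> (at p) v) = fst p * snd v) \<and>
            (\<forall>p\<in>V. frechet_derivative \<psi> (at p) (liouville_field f p)
                     = (- deriv f 0 * fst (\<psi> p), deriv f 0 * snd (\<psi> p)))"
proof -
  obtain R where "0 < R" "ball 0 R \<subseteq> U" using assms(1,2) openE by blast
  then have RU: "{-R<..<R} \<subseteq> U" by (simp add: ball_eq_greaterThanLessThan)
  obtain r g where "0 < r" "r < R" and g: "real_smooth_on {-r<..<r} g" "g 0 = 0"
    and nz: "\<And>y. y \<in> {-r<..<r} \<Longrightarrow> deriv g y \<noteq> 0"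
    and ode: "\<And>y. y \<in> {-r<..<r} \<Longrightarrow> deriv g y * f y = deriv f 0 * g y"
    using linearizing_coordinate[OF \<open>0 < R\<close> real_smooth_on_subset[OF assms(3) RU] assms(4,5)] by metis
  let ?I = "{-r<..<r}"
  have "?I \<subseteq> U" using RU \<open>r < R\<close> by auto
  have "inj_on g ?I"
    using real_smooth_on_has_real_derivative[OF g(1)] nz by (rule inj_on_deriv_nonzero)
  note diffeo = cotangent_lift_diffeomorphism[OF open_greaterThanLessThan g(1) nz this]
  show ?thesis
  proof (rule exI[of _ "UNIV \<times> ?I"], rule exI[of _ "UNIV \<times> g ` ?I"], rule exI[of _ "cotangent_lift g"],
      rule exI[of _ "cotangent_lift (inv_into ?I g)"], intro conjI ballI allI)
    show "open (UNIV \<times> ?I)" by (simp add: open_Times)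
    show "open (UNIV \<times> g ` ?I)" using diffeo(1) by (simp add: open_Times)
    show "(0, 0) \<in> UNIV \<times> ?I" using \<open>0 < r\<close> by simp
    show "UNIV \<times> ?I \<subseteq> {p. snd p \<in> U}" using \<open>?I \<subseteq> U\<close> by auto
    show "cotangent_lift g (0, 0) = (0, 0)" using g(2) by (simp add: cotangent_lift_def)
    show "fst (cotangent_lift g p) * snd (frechet_derivative (cotangent_lift g) (at p) v) = fst p * snd v"
      if "p \<in> UNIV \<times> ?I" for p v
      using that nz by (intro cotangent_lift_preserves_liouville_form[OF g(1)]) auto
    show "frechet_derivative (cotangent_lift g) (at p) (liouville_field f p)
        = (- deriv f 0 * fst (cotangent_lift g p), deriv f 0 * snd (cotangent_lift g p))"
      if "p \<in> UNIV \<times> ?I" for p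
      using that nz ode real_smooth_on_subset[OF assms(3) \<open>?I \<subseteq> U\<close>]
      by (intro cotangent_lift_pushforward_liouville_field[OF open_greaterThanLessThan _ _ g(1)]) auto
  qed (use diffeo in auto)
qed

theorem mainTheorem6:
  fixes f :: "real \<Rightarrow> real" and U :: "real set"
  assumes "open U" and "0 \<in> U" and "smooth_on U f" and "f 0 = 0"
  shows "lin_eigenvalues (frechet_derivative (liouville_field f) (at (0, 0)))
           = {- complex_of_real (deriv f 0), complex_of_real (deriv f 0)}
     \<and> (hyperbolic_zero (liouville_field f) (0, 0) \<longleftrightarrow> deriv f 0 \<noteq> 0)
     \<and> (deriv f 0 \<noteq> 0 \<longrightarrow>
         (\<exists>V W (\<psi> :: real \<times> real \<Rightarrow> real \<times> real) \<phi>.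
            open V \<and> open W \<and> (0, 0) \<in> V \<and> V \<subseteq> {p. snd p \<in> U} \<and>
            \<psi> (0, 0) = (0, 0) \<and> \<psi> ` V = W \<and>
            smooth_on V \<psi> \<and> smooth_on W \<phi> \<and>
            (\<forall>p\<in>V. \<phi> (\<psi> p) = p) \<and> (\<forall>q\<in>W. \<psi> (\<phi> q) = q) \<and>
            (\<forall>p\<in>V. \<forall>v. fst (\<psi> p) * snd (frechet_derivative \<psi> (at p) v) = fst p * snd v) \<and>
            (\<forall>p\<in>V. frechet_derivative \<psi> (at p) (liouville_field f p)
                     = (- deriv f 0 * fst (\<psi> p), deriv f 0 * snd (\<psi> p)))))"
proof -
  have f: "real_smooth_on U f" by (rule real_smooth_on_of_smooth_on[OF assms(1,3)])
  have DX: "frechet_derivative (liouville_field f) (at (0, 0))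
      = (\<lambda>v. (- deriv f 0 * fst v, deriv f 0 * snd v))"
    using frechet_derivative_liouville_field(2)[OF f, of "(0, 0)"] assms(2) by (simp add: mult.commute)
  have eigenvalues: "lin_eigenvalues (frechet_derivative (liouville_field f) (at (0, 0)))
      = {- complex_of_real (deriv f 0), complex_of_real (deriv f 0)}"
    using lin_eigenvalues_diagonal[of "- deriv f 0" "deriv f 0"] by (simp add: DX)
  have "liouville_field f (0, 0) = (0, 0)" using assms(4) by (simp add: liouville_field_def)
  then have "hyperbolic_zero (liouville_field f) (0, 0) \<longleftrightarrow> deriv f 0 \<noteq> 0"
    using frechet_derivative_liouville_field(1)[OF f, of "(0, 0)"] assms(2)
    unfolding hyperbolic_zero_def eigenvalues by auto
  then show ?thesis
    using eigenvalues liouville_field_normal_form[OF assms(1,2) f assms(4)] by blast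
qed

end
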